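(* Let $X$ be a finite set, $t_1<\dots<t_M$ real numbers and $(\mathcal{P}^{t_m})_{m\le M}$ partitions of $X$, with continuous-indexed Multiscale Clustering Filtration $(K^t)_{t\ge t_1}$ and clique complex filtration $(L^t)_{t\ge t_1}$ of the Cluster Assignment Graph, and let $K:=K^{t_M}$. If the sequence is strictly hierarchical, i.e. $\mathcal{P}^{t_1}\le\dots\le\mathcal{P}^{t_M}$, then $H_k^p(L^t)\cong H_k^p(K^t)$ for all integers $0\le k\le\dim(K)-1$, all $t\ge t_1$ and all $p\ge0$.
   Context: A partition of $X$ is a collection of non-empty pairwise disjoint subsets (clusters) whose union is $X$; $\mathcal{P}\le\mathcal{Q}$ means every cluster of $\mathcal{P}$ lies in a cluster of $\mathcal{Q}$. For a finite non-empty set $C$, $\Delta C$ is the set of all non-empty subsets of $C$. The MCF is $K^{t_m}:=\bigcup_{l\le m}\bigcup_{C\in\mathcal{P}^{t_l}}\Delta C$, and for $t\ge t_1$, $K^t:=K^{t_m}$ where $m$ is the largest index with $t_m\le t$. For $t\ge t_1$ let $G_t$ be the graph on $X$ in which distinct $x,y$ are adjacent iff there is $m$ with $t_m\le t$ such that $x,y$ lie in the same cluster of $\mathcal{P}^{t_m}$; $L^t$ is the clique complex of $G_t$. $\dim(K)$ is the maximal dimension of a simplex in $K$. Homology is simplicial homology over $\mathbb{Z}_2$, and for a filtration $(F^t)$, $H_k^p(F^t)$ is the image of $H_k(F^t)\to H_k(F^{t+p})$ induced by inclusion. *)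

theory Defs
  imports Complex_Main "HOL-Library.Disjoint_Sets" "HOL-Algebra.Coset"
begin

definition simplices :: "'a set set \<Rightarrow> nat \<Rightarrow> 'a set set" where
  "simplices K k = {s \<in> K. card s = Suc k}"

definition chain_group :: "'a set set \<Rightarrow> nat \<Rightarrow> 'a set set monoid" where
  "chain_group K k = \<lparr>carrier = Pow (simplices K k), mult = (\<lambda>a b. (a - b) \<union> (b - a)), one = {}\<rparr>"

definition boundary :: "nat \<Rightarrow> 'a set set \<Rightarrow> 'a set set" where
  "boundary k c = (if k = 0 then {} else {f. card f = k \<and> odd (card {s \<in> c. f \<subseteq> s})})"

definition cycles :: "'a set set \<Rightarrow> nat \<Rightarrow> 'a set set set" where
  "cycles K k = {c \<in> Pow (simplices K k). boundary k c = {}}"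

definition boundaries :: "'a set set \<Rightarrow> nat \<Rightarrow> 'a set set set" where
  "boundaries K k = boundary (Suc k) ` Pow (simplices K (Suc k))"

text \<open>Persistent homology H_k^p(F^t): the image of H_k(F^t) \<rightarrow> H_k(F^(t+p)) induced by inclusion,
  realised as the subgroup of H_k(F^(t+p)) = Z_k/B_k consisting of the classes of cycles of F^t.\<close>
definition pers_hom :: "(real \<Rightarrow> 'a set set) \<Rightarrow> nat \<Rightarrow> real \<Rightarrow> real \<Rightarrow> 'a set set set monoid" where
  "pers_hom F k t p =
     (chain_group (F (t + p)) k Mod boundaries (F (t + p)) k)
       \<lparr>carrier := (\<lambda>z. r_coset (chain_group (F (t + p)) k) (boundaries (F (t + p)) k) z) ` cycles (F t) k\<rparr>"

definition refines :: "'a set set \<Rightarrow> 'a set set \<Rightarrow> bool" where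
  "refines P Q \<longleftrightarrow> (\<forall>C\<in>P. \<exists>D\<in>Q. C \<subseteq> D)"

definition Delta :: "'a set \<Rightarrow> 'a set set" where
  "Delta C = {s. s \<noteq> {} \<and> s \<subseteq> C}"

text \<open>K^(t_m) for the index m (partitions indexed 1..M, P m = P^(t_m)).\<close>
definition MCF_idx :: "(nat \<Rightarrow> 'a set set) \<Rightarrow> nat \<Rightarrow> 'a set set" where
  "MCF_idx P m = (\<Union>l\<in>{1..m}. \<Union>C\<in>P l. Delta C)"

definition MCF :: "(nat \<Rightarrow> real) \<Rightarrow> (nat \<Rightarrow> 'a set set) \<Rightarrow> nat \<Rightarrow> real \<Rightarrow> 'a set set" where
  "MCF tm P M t = MCF_idx P (GREATEST m. m \<in> {1..M} \<and> tm m \<le> t)"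

definition CAG_adj :: "(nat \<Rightarrow> real) \<Rightarrow> (nat \<Rightarrow> 'a set set) \<Rightarrow> nat \<Rightarrow> real \<Rightarrow> 'a \<Rightarrow> 'a \<Rightarrow> bool" where
  "CAG_adj tm P M t x y \<longleftrightarrow> x \<noteq> y \<and> (\<exists>m\<in>{1..M}. tm m \<le> t \<and> (\<exists>C\<in>P m. x \<in> C \<and> y \<in> C))"

definition CAG_clique :: "'a set \<Rightarrow> (nat \<Rightarrow> real) \<Rightarrow> (nat \<Rightarrow> 'a set set) \<Rightarrow> nat \<Rightarrow> real \<Rightarrow> 'a set set" where
  "CAG_clique X tm P M t =
     {s. s \<noteq> {} \<and> finite s \<and> s \<subseteq> X \<and> (\<forall>x\<in>s. \<forall>y\<in>s. x \<noteq> y \<longrightarrow> CAG_adj tm P M t x y)}"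

definition cdim :: "'a set set \<Rightarrow> int" where
  "cdim K = int (Max (card ` K)) - 1"

end

theory Submission
  imports Defs
begin

text \<open>For a hierarchical sequence the two filtrations coincide: at each time only the clusters
  of the coarsest partition reached so far matter, since every earlier cluster lies in one of them.
  Hence both \<open>K\<^sup>t\<close> and \<open>L\<^sup>t\<close> equal the union of the full simplices \<open>\<Delta>C\<close> over the clusters \<open>C\<close>
  of that partition (a clique of the graph "lie in a common cluster" of a partition is contained
  in a single cluster), and the persistent homology groups are literally the same.\<close>

lemma refines_refl: "refines P P"
  unfolding refines_def by blast

lemma refines_trans: "refines P Q \<Longrightarrow> refines Q R \<Longrightarrow> refines P R"
  unfolding refines_def by (meson order_trans)

lemma refines_chain:
  assumes "\<forall>m. 1 \<le> m \<longrightarrow> m < M \<longrightarrow> refines (P m) (P (Suc m))"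
    and "1 \<le> l" "l \<le> g" "g \<le> M"
  shows "refines (P l) (P g)"
  using assms(3,4)
proof (induction g rule: dec_induct)
  case base
  show ?case by (rule refines_refl)
next
  case (step n)
  then have "refines (P l) (P n)" "refines (P n) (P (Suc n))" using assms(1,2) by simp_all
  then show ?case by (rule refines_trans)
qed

lemma MCF_idx_hierarchical:
  assumes "\<forall>m. 1 \<le> m \<longrightarrow> m < M \<longrightarrow> refines (P m) (P (Suc m))"
    and "1 \<le> g" "g \<le> M"
  shows "MCF_idx P g = (\<Union>D\<in>P g. Delta D)"
proof
  show "MCF_idx P g \<subseteq> (\<Union>D\<in>P g. Delta D)"
  proof
    fix s assume "s \<in> MCF_idx P g"
    then obtain l C where l: "l \<in> {1..g}" "C \<in> P l" "s \<in> Delta C"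
      unfolding MCF_idx_def by blast
    have "refines (P l) (P g)" using refines_chain[OF assms(1)] l(1) assms(3) by simp
    then obtain D where "D \<in> P g" "C \<subseteq> D" using l(2) unfolding refines_def by blast
    with l(3) show "s \<in> (\<Union>D\<in>P g. Delta D)" unfolding Delta_def by blast
  qed
  show "(\<Union>D\<in>P g. Delta D) \<subseteq> MCF_idx P g"
    unfolding MCF_idx_def using assms(2) by auto
qed

lemma clique_complex_partition:
  assumes "finite X" and "partition_on X Q"
  shows "{s. s \<noteq> {} \<and> finite s \<and> s \<subseteq> X \<and> (\<forall>x\<in>s. \<forall>y\<in>s. x \<noteq> y \<longrightarrow> (\<exists>C\<in>Q. x \<in> C \<and> y \<in> C))}
    = (\<Union>C\<in>Q. Delta C)" (is "?clique = _")
proof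
  show "?clique \<subseteq> (\<Union>C\<in>Q. Delta C)"
  proof
    fix s assume "s \<in> ?clique"
    then have s: "s \<noteq> {}" "s \<subseteq> X"
      and pairwise: "\<forall>x\<in>s. \<forall>y\<in>s. x \<noteq> y \<longrightarrow> (\<exists>C\<in>Q. x \<in> C \<and> y \<in> C)"
      by auto
    obtain x where x: "x \<in> s" using s(1) by blast
    obtain D where D: "D \<in> Q" "x \<in> D"
      using partition_onD1[OF assms(2)] x s(2) by blast
    have "y \<in> D" if y: "y \<in> s" "y \<noteq> x" for y
    proof -
      obtain C where C: "C \<in> Q" "x \<in> C" "y \<in> C" using pairwise x y by metis
      then have "C = D"
        using D disjointD[OF partition_onD2[OF assms(2)]] by blast
      with C show ?thesis by simp
    qed
    then have "s \<subseteq> D" using D(2) by blast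
    with s(1) D(1) show "s \<in> (\<Union>C\<in>Q. Delta C)" unfolding Delta_def by blast
  qed
  show "(\<Union>C\<in>Q. Delta C) \<subseteq> ?clique"
  proof
    fix s assume "s \<in> (\<Union>C\<in>Q. Delta C)"
    then obtain C where C: "C \<in> Q" "s \<noteq> {}" "s \<subseteq> C" unfolding Delta_def by blast
    then have "s \<subseteq> X" using partition_onD1[OF assms(2)] by blast
    with C show "s \<in> ?clique" using finite_subset[OF _ assms(1)] by blast
  qed
qed

definition current_index :: "(nat \<Rightarrow> real) \<Rightarrow> nat \<Rightarrow> real \<Rightarrow> nat" where
  "current_index tm M t = (GREATEST m. m \<in> {1..M} \<and> tm m \<le> t)"

lemma MCF_current_index: "MCF tm P M t = MCF_idx P (current_index tm M t)"
  unfolding MCF_def current_index_def ..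

lemma current_index_greatest:
  assumes "1 \<le> M" and "tm 1 \<le> t"
  shows "current_index tm M t \<in> {1..M}" "tm (current_index tm M t) \<le> t"
    and "m \<in> {1..M} \<Longrightarrow> tm m \<le> t \<Longrightarrow> m \<le> current_index tm M t"
proof -
  let ?Q = "\<lambda>m. m \<in> {1..M} \<and> tm m \<le> t"
  have "?Q 1" using assms by simp
  then have "?Q (current_index tm M t)"
    unfolding current_index_def by (rule GreatestI_nat[of _ _ M]) simp
  then show "current_index tm M t \<in> {1..M}" "tm (current_index tm M t) \<le> t" by simp_all
  show "m \<in> {1..M} \<Longrightarrow> tm m \<le> t \<Longrightarrow> m \<le> current_index tm M t"
    unfolding current_index_def by (rule Greatest_le_nat[of _ _ M]) auto
qed

lemma CAG_adj_hierarchical: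
  assumes "\<forall>m. 1 \<le> m \<longrightarrow> m < M \<longrightarrow> refines (P m) (P (Suc m))"
    and "1 \<le> M" and "tm 1 \<le> t"
  shows "CAG_adj tm P M t x y \<longleftrightarrow> x \<noteq> y \<and> (\<exists>D\<in>P (current_index tm M t). x \<in> D \<and> y \<in> D)"
proof
  let ?g = "current_index tm M t"
  assume "CAG_adj tm P M t x y"
  then obtain l C where l: "x \<noteq> y" "l \<in> {1..M}" "tm l \<le> t" "C \<in> P l" "x \<in> C" "y \<in> C"
    unfolding CAG_adj_def by blast
  have "l \<le> ?g" using current_index_greatest(3)[where tm=tm, OF assms(2,3) l(2,3)] .
  then have "refines (P l) (P ?g)"
    using refines_chain[OF assms(1)] l(2) current_index_greatest(1)[where tm=tm, OF assms(2,3)] by simp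
  then obtain D where "D \<in> P ?g" "C \<subseteq> D" using l(4) unfolding refines_def by blast
  with l(1,5,6) show "x \<noteq> y \<and> (\<exists>D\<in>P ?g. x \<in> D \<and> y \<in> D)" by blast
next
  assume "x \<noteq> y \<and> (\<exists>D\<in>P (current_index tm M t). x \<in> D \<and> y \<in> D)"
  then show "CAG_adj tm P M t x y"
    unfolding CAG_adj_def using current_index_greatest(1,2)[where tm=tm, OF assms(2,3)] by blast
qed

lemma CAG_clique_eq_MCF_hierarchical:
  assumes "finite X" and "1 \<le> M"
    and "\<forall>m\<in>{1..M}. partition_on X (P m)"
    and "\<forall>m. 1 \<le> m \<longrightarrow> m < M \<longrightarrow> refines (P m) (P (Suc m))"
    and "tm 1 \<le> t"
  shows "CAG_clique X tm P M t = MCF tm P M t"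
proof -
  let ?g = "current_index tm M t"
  have g: "?g \<in> {1..M}" using current_index_greatest(1)[where tm=tm, OF assms(2,5)] .
  have "partition_on X (P ?g)" using assms(3) g by blast
  have "CAG_clique X tm P M t
      = {s. s \<noteq> {} \<and> finite s \<and> s \<subseteq> X \<and> (\<forall>x\<in>s. \<forall>y\<in>s. x \<noteq> y \<longrightarrow> (\<exists>D\<in>P ?g. x \<in> D \<and> y \<in> D))}"
    unfolding CAG_clique_def CAG_adj_hierarchical[where tm=tm, OF assms(4,2,5)] by simp
  also have "\<dots> = (\<Union>D\<in>P ?g. Delta D)"
    by (rule clique_complex_partition[OF assms(1) \<open>partition_on X (P ?g)\<close>])
  also have "\<dots> = MCF tm P M t"
    unfolding MCF_current_index using MCF_idx_hierarchical[OF assms(4)] g by simp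
  finally show ?thesis .
qed

theorem corollary2:
  fixes X :: "'a set" and M :: nat and tm :: "nat \<Rightarrow> real" and P :: "nat \<Rightarrow> 'a set set"
    and k :: nat and t p :: real
  assumes "finite X"
    and "1 \<le> M"
    and "\<forall>i j. 1 \<le> i \<longrightarrow> i < j \<longrightarrow> j \<le> M \<longrightarrow> tm i < tm j"
    and "\<forall>m\<in>{1..M}. partition_on X (P m)"
    and "\<forall>m. 1 \<le> m \<longrightarrow> m < M \<longrightarrow> refines (P m) (P (Suc m))"
    and "int k \<le> cdim (MCF tm P M (tm M)) - 1"
    and "tm 1 \<le> t"
    and "0 \<le> p"
  shows "pers_hom (CAG_clique X tm P M) k t p \<cong> pers_hom (MCF tm P M) k t p"
proof -
  have "CAG_clique X tm P M t = MCF tm P M t"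
    by (rule CAG_clique_eq_MCF_hierarchical[where tm=tm, OF assms(1,2,4,5,7)])
  moreover have "CAG_clique X tm P M (t + p) = MCF tm P M (t + p)"
    by (rule CAG_clique_eq_MCF_hierarchical[where tm=tm, OF assms(1,2,4,5)]) (use assms(7,8) in simp)
  ultimately have "pers_hom (CAG_clique X tm P M) k t p = pers_hom (MCF tm P M) k t p"
    unfolding pers_hom_def by simp
  then show ?thesis by simp
qed

end
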